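(* Let $\mathcal{L}$ be a GSOS language (a signature of operators together with a set of GSOS rules over labels $\Delta_\tau$) that is in the simply WB cool format. Then the GSOS law $\rho:\Sigma(\mathrm{Id}\times T)\Rightarrow T\Sigma^{*}$ on $\mathbf{Set}$ induced by $\mathcal{L}$, with $T=\mathcal{P}_c(\Delta_\tau\times\mathrm{Id})$ carrying the monad structure described below (equivalently its extension $\lambda:\Sigma^{*}(\mathrm{Id}\times T)\Rightarrow T\Sigma^{*}$ with $\rho=\lambda\circ\theta$), satisfies continuity, unitality and observability.
   Context: Labels: $\Delta_\tau=\Delta\cup\overline{\Delta}\cup\{\tau\}$ with $\tau$ the internal action. $\Sigma$ is the polynomial $\mathbf{Set}$-functor of the signature, $\Sigma^{*}X$ the set of terms over $X$, $\theta:\Sigma\Rightarrow\Sigma^{*}$ the inclusion of one-layer terms. $\mathcal{P}_c$ is the countable powerset. The monad $T=\mathcal{P}_c(\Delta_\tau\times\mathrm{Id})$ has unit $\eta(x)=\{(\tau,x)\}$ and Kleisli composition $(g\diamond f)(x)=\{(\delta,z)\mid (\delta_1,y)\in f(x),(\delta_2,z)\in g(y),\ \text{and }(\delta_1=\tau,\delta=\delta_2)\text{ or }(\delta_2=\tau,\delta=\delta_1)\}$; Kleisli hom-sets are ordered pointwise by inclusion ($f\le g$ iff $f(x)\subseteq g(x)$ for all $x$), with joins and suprema of chains given by pointwise unions. For a Kleisli endomorphism $\alpha:X\to TX$ its rt-closure is $\alpha^{*}=\bigvee_{n<\omega}(\eta_X\vee\alpha)^n$ (Kleisli powers). GSOS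 rules have the form $\frac{\{x_i\xrightarrow{c}y\}\ \cup\ \{x_i\not\xrightarrow{c}\}}{o(x_1,\dots,x_n)\xrightarrow{\alpha}t}$ with distinct variables, $t$ a term over the $x_i$ and the premise targets $y$; the induced law sends $o((x_1,W_1),\dots,(x_n,W_n))$ (with $W_i\subseteq\Delta_\tau\times X$) to the set of all $(\alpha,t[\ldots])$ obtained from rules of $o$ whose premises are satisfied by the $W_i$ (positive premise $x_i\xrightarrow{c}y$ satisfied by choosing $(c,y')\in W_i$ and substituting $y'$ for $y$). A rule with premise $x_i\xrightarrow{\tau}y$ and conclusion $o(x_1,\dots,x_n)\xrightarrow{\tau}o(x_1,\dots,x_n)[y/x_i]$ is a patience rule for argument $i$ of $o$. An operator is straight if it has no rule in which a variable occurs more than once in the left-hand sides of the premises; smooth if it is straight and has no rule in which a variable occurs both in the target and in the left-hand side of a premise. Argument $i$ of $o$ is active if some rule of $o$ has $x_i$ as left-hand side of a premise. A variable $x$ is receiving in a term $t$ if $t$ is the target of a rule in which $x$ is the right-hand side of a premise; argument $i$ of $o$ is receiving if some variable $x$ is receiving in a term $t$ having a subterm $o(v_1,\dots,v_n)$ with $x$ occurring in $v_i$. $\mathcal{L}$ is simply WB cool if it is positive (no negative premises) and: (1) all operators are straight; (2) the only rules with $\tau$-premises are patience rules; (3) every active argument of an operator has a patience rule; (4) every receiving argument of an operator has a patience rule; (5) all operators are smooth. For a GSOS law $\lambda$ and $f:X\to TX$, $\lambda_X\circ\Sigma^{*}\langle\mathrm{id},f\rangle$ is a Kleisli endomorphism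 of $\Sigma^{*}X$. Continuity: for every $X$ and ascending chain $f_0\le f_1\le\cdots:X\to TX$, $\lambda_X\circ\Sigma^{*}\langle\mathrm{id},\bigvee_i f_i\rangle=\bigvee_i\lambda_X\circ\Sigma^{*}\langle\mathrm{id},f_i\rangle$. Unitality: for every $f:X\to TX$, $\lambda_X\circ\Sigma^{*}\langle\mathrm{id},\eta_X\vee f\rangle\le(\lambda_X\circ\Sigma^{*}\langle\mathrm{id},f\rangle)^{*}$. Observability: for every $f:X\to TX$, $\lambda_X\circ\Sigma^{*}\langle\mathrm{id},f\diamond f\rangle\le(\lambda_X\circ\Sigma^{*}\langle\mathrm{id},f\rangle)^{*}$. *)

theory Defs
  imports Main "HOL-Library.Countable_Set"
begin

datatype 'd lab = Act 'd | CoAct 'd | Tau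

datatype ('g, 'v) trm = Var 'v | App 'g "('g, 'v) trm list"

fun wf_term :: "('g \<Rightarrow> nat) \<Rightarrow> ('g, 'v) trm \<Rightarrow> bool" where
  "wf_term ar (Var x) = True"
| "wf_term ar (App g ts) = (length ts = ar g \<and> (\<forall>t\<in>set ts. wf_term ar t))"

fun vars :: "('g, 'v) trm \<Rightarrow> 'v set" where
  "vars (Var x) = {x}"
| "vars (App g ts) = (\<Union>t\<in>set ts. vars t)"

fun subterms :: "('g, 'v) trm \<Rightarrow> ('g, 'v) trm set" where
  "subterms (Var x) = {Var x}"
| "subterms (App g ts) = insert (App g ts) (\<Union>t\<in>set ts. subterms t)"

text \<open>Substitution (the Kleisli extension / multiplication of the term monad Sigma-star).\<close>
fun subst :: "('v \<Rightarrow> ('g, 'w) trm) \<Rightarrow> ('g, 'v) trm \<Rightarrow> ('g, 'w) trm" where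
  "subst \<sigma> (Var x) = \<sigma> x"
| "subst \<sigma> (App g ts) = App g (map (subst \<sigma>) ts)"

text \<open>Variables of a GSOS rule for operator g of arity n: PX i is the source
  variable x_i (i < n); PY j is the target y of the j-th positive premise.
  Using positional indices makes all variables automatically distinct.\<close>
datatype rvar = PX nat | PY nat

text \<open>A GSOS rule: operator, positive premises (i, c) meaning x_i -c-> y_j
  (j = position in the list), negative premises (i, c) meaning x_i -/c->,
  action of the conclusion and target term.\<close>
datatype ('g, 'd) rule =
  Rule (rop: 'g) (rpos: "(nat \<times> 'd lab) list") (rneg: "(nat \<times> 'd lab) list")
       (ract: "'d lab") (rtgt: "('g, rvar) trm")

definition wf_rule :: "('g \<Rightarrow> nat) \<Rightarrow> ('g, 'd) rule \<Rightarrow> bool" where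
  "wf_rule ar r \<longleftrightarrow>
     (\<forall>(i, c)\<in>set (rpos r @ rneg r). i < ar (rop r)) \<and>
     wf_term ar (rtgt r) \<and>
     (\<forall>v\<in>vars (rtgt r). case v of PX i \<Rightarrow> i < ar (rop r) | PY j \<Rightarrow> j < length (rpos r))"

text \<open>A GSOS language: a signature (arity function) and a set of well-formed rules.
  The rule set is countable, so that the induced law lands in the countable powerset.\<close>
definition gsos_language :: "('g \<Rightarrow> nat) \<Rightarrow> ('g, 'd) rule set \<Rightarrow> bool" where
  "gsos_language ar R \<longleftrightarrow> countable R \<and> (\<forall>r\<in>R. wf_rule ar r)"

definition eta :: "'x \<Rightarrow> ('d lab \<times> 'x) set" where
  "eta x = {(Tau, x)}"

definition kcomp :: "('y \<Rightarrow> ('d lab \<times> 'z) set) \<Rightarrow> ('x \<Rightarrow> ('d lab \<times> 'y) set)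
                      \<Rightarrow> 'x \<Rightarrow> ('d lab \<times> 'z) set" where
  "kcomp g f x = {(\<delta>, z) | \<delta> z. \<exists>\<delta>1 y \<delta>2. (\<delta>1, y) \<in> f x \<and> (\<delta>2, z) \<in> g y \<and>
                        ((\<delta>1 = Tau \<and> \<delta> = \<delta>2) \<or> (\<delta>2 = Tau \<and> \<delta> = \<delta>1))}"

definition kmap :: "('x \<Rightarrow> ('d lab \<times> 'y) set) \<Rightarrow> bool" where
  "kmap f \<longleftrightarrow> (\<forall>x. countable (f x))"

fun kpow :: "('x \<Rightarrow> ('d lab \<times> 'x) set) \<Rightarrow> nat \<Rightarrow> 'x \<Rightarrow> ('d lab \<times> 'x) set" where
  "kpow \<alpha> 0 = eta"
| "kpow \<alpha> (Suc n) = kcomp \<alpha> (kpow \<alpha> n)"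

definition rtc :: "('x \<Rightarrow> ('d lab \<times> 'x) set) \<Rightarrow> 'x \<Rightarrow> ('d lab \<times> 'x) set" where
  "rtc \<alpha> x = (\<Union>n. kpow (\<lambda>y. eta y \<union> \<alpha> y) n x)"

text \<open>rho_Y : Sigma(Id \<times> T) Y \<rightarrow> T Sigma* Y, applied to g((y_1,W_1),...,(y_n,W_n)).\<close>
definition rho :: "('g, 'd) rule set \<Rightarrow> 'g \<Rightarrow> ('y \<times> ('d lab \<times> 'y) set) list
                    \<Rightarrow> ('d lab \<times> ('g, 'y) trm) set" where
  "rho R g args =
     {(ract r, subst (\<lambda>v. case v of PX i \<Rightarrow> Var (fst (args ! i)) | PY j \<Rightarrow> Var (us ! j)) (rtgt r))
      | r us. r \<in> R \<and> rop r = g \<and>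
        (\<forall>(i, c)\<in>set (rneg r). \<not> (\<exists>u. (c, u) \<in> snd (args ! i))) \<and>
        length us = length (rpos r) \<and>
        (\<forall>j < length (rpos r). (snd (rpos r ! j), us ! j) \<in> snd (args ! fst (rpos r ! j)))}"

text \<open>lam R f = lambda_X \<circ> Sigma*<id, f> : Sigma* X \<rightarrow> T Sigma* X, where lambda is the
  canonical extension of rho to Sigma* (so that rho = lambda \<circ> theta).\<close>
fun lam :: "('g, 'd) rule set \<Rightarrow> ('x \<Rightarrow> ('d lab \<times> 'x) set) \<Rightarrow> ('g, 'x) trm
             \<Rightarrow> ('d lab \<times> ('g, 'x) trm) set" where
  "lam R f (Var x) = {(c, Var y) | c y. (c, y) \<in> f x}"
| "lam R f (App g ts) =
     {(c, subst id t) | c t. (c, t) \<in> rho R g (zip ts (map (lam R f) ts))}"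

definition positive :: "('g, 'd) rule set \<Rightarrow> bool" where
  "positive R \<longleftrightarrow> (\<forall>r\<in>R. rneg r = [])"

definition premise_lhs :: "('g, 'd) rule \<Rightarrow> nat list" where
  "premise_lhs r = map fst (rpos r @ rneg r)"

definition patience_rule :: "('g \<Rightarrow> nat) \<Rightarrow> 'g \<Rightarrow> nat \<Rightarrow> ('g, 'd) rule \<Rightarrow> bool" where
  "patience_rule ar g i r \<longleftrightarrow>
     rop r = g \<and> rpos r = [(i, Tau)] \<and> rneg r = [] \<and> ract r = Tau \<and>
     rtgt r = App g (map (\<lambda>k. if k = i then Var (PY 0) else Var (PX k)) [0..<ar g])"

definition straight_op :: "('g, 'd) rule set \<Rightarrow> 'g \<Rightarrow> bool" where
  "straight_op R g \<longleftrightarrow> (\<forall>r\<in>R. rop r = g \<longrightarrow> distinct (premise_lhs r))"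

definition smooth_op :: "('g, 'd) rule set \<Rightarrow> 'g \<Rightarrow> bool" where
  "smooth_op R g \<longleftrightarrow> straight_op R g \<and>
     (\<forall>r\<in>R. rop r = g \<longrightarrow> (\<forall>i\<in>set (premise_lhs r). PX i \<notin> vars (rtgt r)))"

definition active_arg :: "('g, 'd) rule set \<Rightarrow> 'g \<Rightarrow> nat \<Rightarrow> bool" where
  "active_arg R g i \<longleftrightarrow> (\<exists>r\<in>R. rop r = g \<and> i \<in> set (premise_lhs r))"

definition receiving_arg :: "('g, 'd) rule set \<Rightarrow> 'g \<Rightarrow> nat \<Rightarrow> bool" where
  "receiving_arg R g i \<longleftrightarrow>
     (\<exists>r\<in>R. \<exists>j < length (rpos r). \<exists>vs. App g vs \<in> subterms (rtgt r) \<and>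
        i < length vs \<and> PY j \<in> vars (vs ! i))"

definition has_patience :: "('g \<Rightarrow> nat) \<Rightarrow> ('g, 'd) rule set \<Rightarrow> 'g \<Rightarrow> nat \<Rightarrow> bool" where
  "has_patience ar R g i \<longleftrightarrow> (\<exists>r\<in>R. patience_rule ar g i r)"

definition simply_wb_cool :: "('g \<Rightarrow> nat) \<Rightarrow> ('g, 'd) rule set \<Rightarrow> bool" where
  "simply_wb_cool ar R \<longleftrightarrow>
     positive R \<and>
     (\<forall>g. straight_op R g) \<and>
     (\<forall>r\<in>R. (\<exists>(i, c)\<in>set (rpos r @ rneg r). c = Tau) \<longrightarrow> patience_rule ar (rop r) (fst (hd (rpos r))) r) \<and>
     (\<forall>g i. active_arg R g i \<longrightarrow> has_patience ar R g i) \<and>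
     (\<forall>g i. receiving_arg R g i \<longrightarrow> has_patience ar R g i) \<and>
     (\<forall>g. smooth_op R g)"

end

theory Submission
  imports Defs
begin

text \<open>
  The rt-closure of a Kleisli map consists exactly of its weak transitions
  \<open>\<tau>\<^sup>* c \<tau>\<^sup>*\<close> (and \<open>\<tau>\<^sup>*\<close> for \<open>c = \<tau>\<close>). Both \<open>\<eta> \<or> f\<close> and \<open>f \<diamond> f\<close> only contain weak
  transitions of \<open>f\<close>, so unitality and observability follow once we know that \<open>\<lambda>\<close> turns
  weak transitions of the arguments into weak transitions of the term. A rule with a \<open>\<tau>\<close>-premise is a patience rule and merely lifts a \<open>\<tau>\<^sup>*\<close>-sequence of
  its argument. For any other rule, the patience rules of the active arguments let each argument
  first perform the leading \<open>\<tau>\<close>-steps of its premise (straightness makes these arguments distinct),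
  then the rule fires on the strong transitions; by smoothness the target no longer mentions the
  advanced arguments, and the patience rules of the receiving arguments absorb the trailing
  \<open>\<tau>\<close>-steps inside the target. Continuity holds because a positive rule has finitely many
  premises, each of which is met at some stage of the chain.
\<close>

section \<open>Weak transitions and the rt-closure\<close>

definition tau_step :: "('x \<Rightarrow> ('d lab \<times> 'x) set) \<Rightarrow> 'x \<Rightarrow> 'x \<Rightarrow> bool" where
  "tau_step \<alpha> x y \<longleftrightarrow> (Tau, y) \<in> \<alpha> x"

abbreviation tau_steps :: "('x \<Rightarrow> ('d lab \<times> 'x) set) \<Rightarrow> 'x \<Rightarrow> 'x \<Rightarrow> bool" where
  "tau_steps \<alpha> \<equiv> (tau_step \<alpha>)\<^sup>*\<^sup>*"

definition weak_step :: "('x \<Rightarrow> ('d lab \<times> 'x) set) \<Rightarrow> 'd lab \<Rightarrow> 'x \<Rightarrow> 'x \<Rightarrow> bool" where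
  "weak_step \<alpha> c x y \<longleftrightarrow>
     (c = Tau \<and> tau_steps \<alpha> x y) \<or> (\<exists>a b. tau_steps \<alpha> x a \<and> (c, b) \<in> \<alpha> a \<and> tau_steps \<alpha> b y)"

lemma weak_stepI: "tau_steps \<alpha> x a \<Longrightarrow> (c, b) \<in> \<alpha> a \<Longrightarrow> tau_steps \<alpha> b y \<Longrightarrow> weak_step \<alpha> c x y"
  unfolding weak_step_def by blast

lemma weak_step_Tau_iff: "weak_step \<alpha> Tau x y \<longleftrightarrow> tau_steps \<alpha> x y"
proof
  assume "weak_step \<alpha> Tau x y"
  then show "tau_steps \<alpha> x y"
    unfolding weak_step_def tau_step_def by (auto intro: rtranclp_trans converse_rtranclp_into_rtranclp)
qed (simp add: weak_step_def)

lemma weak_step_tau_steps_trans: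
  "tau_steps \<alpha> x a \<Longrightarrow> weak_step \<alpha> c a b \<Longrightarrow> tau_steps \<alpha> b y \<Longrightarrow> weak_step \<alpha> c x y"
  unfolding weak_step_def by (auto intro: rtranclp_trans)

lemma weak_step_if_mem_kpow: "(c, y) \<in> kpow (\<lambda>y. eta y \<union> \<alpha> y) n x \<Longrightarrow> weak_step \<alpha> c x y"
proof (induction n arbitrary: c y)
  case 0
  then show ?case by (simp add: eta_def weak_step_Tau_iff)
next
  case (Suc n)
  obtain c1 z c2 where prefix: "(c1, z) \<in> kpow (\<lambda>y. eta y \<union> \<alpha> y) n x"
    and last: "(c2, y) \<in> eta z \<union> \<alpha> z" and labels: "c1 = Tau \<and> c = c2 \<or> c2 = Tau \<and> c = c1"
    using Suc.prems by (simp add: kcomp_def) blast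
  have first: "weak_step \<alpha> c1 x z" using prefix by (rule Suc.IH)
  show ?case
  proof (cases "c2 = Tau")
    case True
    from last have "tau_steps \<alpha> z y"
    proof
      assume "(c2, y) \<in> \<alpha> z"
      then show ?thesis using True by (simp add: tau_step_def r_into_rtranclp)
    qed (simp add: eta_def)
    moreover have "c = c1" using labels True by auto
    ultimately show ?thesis using weak_step_tau_steps_trans[OF rtranclp.rtrancl_refl first] by simp
  next
    case False
    then have "c1 = Tau" "c = c2" using labels by auto
    have "(c2, y) \<in> \<alpha> z" using last False by (auto simp: eta_def)
    then show ?thesis
      using weak_stepI[OF _ _ rtranclp.rtrancl_refl] first \<open>c1 = Tau\<close> \<open>c = c2\<close>
      by (simp add: weak_step_Tau_iff)
  qed
qed

lemma rtc_refl: "(Tau, x) \<in> rtc \<alpha> x"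
proof -
  have "(Tau, x) \<in> kpow (\<lambda>y. eta y \<union> \<alpha> y) 0 x" by (simp add: eta_def)
  then show ?thesis unfolding rtc_def by blast
qed

lemma rtc_step_right:
  assumes "(c, y) \<in> rtc \<alpha> x" and "(d, z) \<in> \<alpha> y" and "c = Tau \<and> e = d \<or> d = Tau \<and> e = c"
  shows "(e, z) \<in> rtc \<alpha> x"
proof -
  obtain n where "(c, y) \<in> kpow (\<lambda>y. eta y \<union> \<alpha> y) n x" using assms(1) unfolding rtc_def by blast
  with assms(2,3) have "(e, z) \<in> kpow (\<lambda>y. eta y \<union> \<alpha> y) (Suc n) x"
    unfolding kpow.simps kcomp_def mem_Collect_eq by blast
  then show ?thesis unfolding rtc_def by blast
qed

lemma rtc_tau_step_right: "(c, y) \<in> rtc \<alpha> x \<Longrightarrow> (Tau, z) \<in> \<alpha> y \<Longrightarrow> (c, z) \<in> rtc \<alpha> x"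
  using rtc_step_right[of c y \<alpha> x Tau z c] by simp

lemma rtc_step_right_Tau: "(Tau, y) \<in> rtc \<alpha> x \<Longrightarrow> (c, z) \<in> \<alpha> y \<Longrightarrow> (c, z) \<in> rtc \<alpha> x"
  using rtc_step_right[of Tau y \<alpha> x c z c] by simp

lemma rtc_tau_steps_right: "tau_steps \<alpha> y z \<Longrightarrow> (c, y) \<in> rtc \<alpha> x \<Longrightarrow> (c, z) \<in> rtc \<alpha> x"
  by (induction rule: rtranclp_induct) (simp_all add: tau_step_def rtc_tau_step_right)

lemma mem_rtc_iff: "(c, y) \<in> rtc \<alpha> x \<longleftrightarrow> weak_step \<alpha> c x y"
proof
  assume "(c, y) \<in> rtc \<alpha> x"
  then show "weak_step \<alpha> c x y" unfolding rtc_def by (blast intro: weak_step_if_mem_kpow)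
next
  assume "weak_step \<alpha> c x y"
  then consider "c = Tau" "tau_steps \<alpha> x y"
    | a b where "tau_steps \<alpha> x a" "(c, b) \<in> \<alpha> a" "tau_steps \<alpha> b y"
    unfolding weak_step_def by blast
  then show "(c, y) \<in> rtc \<alpha> x"
  proof cases
    case 1
    then show ?thesis using rtc_tau_steps_right[OF _ rtc_refl] by simp
  next
    case 2
    show ?thesis
      using rtc_tau_steps_right[OF 2(3) rtc_step_right_Tau[OF rtc_tau_steps_right[OF 2(1) rtc_refl] 2(2)]] .
  qed
qed

lemma eta_union_subset_rtc: "eta x \<union> \<alpha> x \<subseteq> rtc \<alpha> x"
  using rtc_refl rtc_step_right_Tau[OF rtc_refl] by (auto simp: eta_def)

lemma kcomp_self_subset_rtc: "kcomp \<alpha> \<alpha> x \<subseteq> rtc \<alpha> x"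
proof
  fix p assume "p \<in> kcomp \<alpha> \<alpha> x"
  then obtain c1 y c2 z c where p: "p = (c, z)" and first: "(c1, y) \<in> \<alpha> x" and second: "(c2, z) \<in> \<alpha> y"
    and labels: "c1 = Tau \<and> c = c2 \<or> c2 = Tau \<and> c = c1"
    unfolding kcomp_def by blast
  have first_rtc: "(c1, y) \<in> rtc \<alpha> x" using rtc_step_right_Tau[OF rtc_refl[of x \<alpha>] first] .
  from labels show "p \<in> rtc \<alpha> x"
  proof
    assume "c1 = Tau \<and> c = c2"
    then show ?thesis using rtc_step_right_Tau[of y \<alpha> x c2 z] first_rtc second unfolding p by simp
  next
    assume "c2 = Tau \<and> c = c1"
    then show ?thesis using rtc_tau_step_right[OF first_rtc] second unfolding p by simp
  qed
qed

section \<open>Positive GSOS laws\<close>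

lemma tau_steps_lam_Var: "tau_steps f x y \<Longrightarrow> tau_steps (lam R f) (Var x) (Var y)"
proof (induction rule: rtranclp_induct)
  case (step y z)
  then have "tau_step (lam R f) (Var y) (Var z)" by (simp add: tau_step_def)
  with step.IH show ?case by (rule rtranclp.rtrancl_into_rtrancl)
qed simp

lemma weak_step_lam_Var: "weak_step f c x y \<Longrightarrow> weak_step (lam R f) c (Var x) (Var y)"
proof -
  assume "weak_step f c x y"
  then consider "c = Tau" "tau_steps f x y"
    | a b where "tau_steps f x a" "(c, b) \<in> f a" "tau_steps f b y"
    unfolding weak_step_def by blast
  then show ?thesis
  proof cases
    case 1
    then show ?thesis using tau_steps_lam_Var by (simp add: weak_step_Tau_iff)
  next
    case 2
    then have "(c, Var b) \<in> lam R f (Var a)" by simp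
    with 2 show ?thesis using weak_stepI tau_steps_lam_Var by metis
  qed
qed

lemma subst_subst: "subst \<tau> (subst \<sigma> t) = subst (\<lambda>v. subst \<tau> (\<sigma> v)) t"
  by (induction t) auto

lemma subst_cong: "(\<And>v. v \<in> vars t \<Longrightarrow> \<sigma> v = \<sigma>' v) \<Longrightarrow> subst \<sigma> t = subst \<sigma>' t"
  by (induction t) auto

lemma vars_subterm: "s \<in> subterms t \<Longrightarrow> vars s \<subseteq> vars t"
  by (induction t) auto

lemma self_in_subterms: "t \<in> subterms t"
  by (cases t) auto

definition rule_subst :: "('g, 'x) trm list \<Rightarrow> ('g, 'x) trm list \<Rightarrow> rvar \<Rightarrow> ('g, 'x) trm" where
  "rule_subst ts us v = (case v of PX i \<Rightarrow> ts ! i | PY j \<Rightarrow> us ! j)"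

lemma patience_target:
  assumes "patience_rule ar g i r" and "length ts = ar g" and "i < ar g"
  shows "subst (rule_subst ts [u]) (rtgt r) = App g (ts[i := u])"
proof -
  have "rtgt r = App g (map (\<lambda>k. if k = i then Var (PY 0) else Var (PX k)) [0..<ar g])"
    using assms(1) unfolding patience_rule_def by blast
  then have "subst (rule_subst ts [u]) (rtgt r) = App g (map (\<lambda>k. if k = i then u else ts ! k) [0..<ar g])"
    by (simp add: rule_subst_def)
  also have "map (\<lambda>k. if k = i then u else ts ! k) [0..<ar g] = ts[i := u]"
    using assms(2,3) by (simp add: list_eq_iff_nth_eq nth_list_update)
  finally show ?thesis .
qed

locale positive_gsos =
  fixes ar :: "'g \<Rightarrow> nat" and R :: "('g, 'd) rule set"
  assumes wf_rules: "r \<in> R \<Longrightarrow> wf_rule ar r"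
    and no_negative_premises: "r \<in> R \<Longrightarrow> rneg r = []"
begin

lemma premise_source_less:
  assumes "r \<in> R" and "j < length (rpos r)"
  shows "fst (rpos r ! j) < ar (rop r)"
proof -
  have "(fst (rpos r ! j), snd (rpos r ! j)) \<in> set (rpos r @ rneg r)" using assms(2) by simp
  then show ?thesis using wf_rules[OF assms(1)] unfolding wf_rule_def by blast
qed

lemma wf_term_target: "r \<in> R \<Longrightarrow> wf_term ar (rtgt r)"
  using wf_rules unfolding wf_rule_def by blast

lemma target_vars_bounded:
  "r \<in> R \<Longrightarrow> v \<in> vars (rtgt r) \<Longrightarrow> (case v of PX i \<Rightarrow> i < ar (rop r) | PY j \<Rightarrow> j < length (rpos r))"
  using wf_rules unfolding wf_rule_def by blast

lemma lam_App_iff: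
  assumes len: "length ts = ar g"
  shows "(c, u) \<in> lam R f (App g ts) \<longleftrightarrow>
    (\<exists>r us. r \<in> R \<and> rop r = g \<and> length us = length (rpos r) \<and>
       (\<forall>j < length (rpos r). (snd (rpos r ! j), us ! j) \<in> lam R f (ts ! fst (rpos r ! j))) \<and>
       c = ract r \<and> u = subst (rule_subst ts us) (rtgt r))" (is "_ \<longleftrightarrow> ?rhs")
proof -
  let ?args = "zip ts (map (lam R f) ts)"
  have args: "?args ! i = (ts ! i, lam R f (ts ! i))" if "i < ar g" for i
    using that len by simp
  have target: "subst id (subst (\<lambda>v. case v of PX i \<Rightarrow> Var (fst (?args ! i)) | PY j \<Rightarrow> Var (us ! j)) (rtgt r))
      = subst (rule_subst ts us) (rtgt r)" if "r \<in> R" "rop r = g" for r us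
    unfolding subst_subst
    by (rule subst_cong) (use target_vars_bounded[OF that(1)] that(2) args in
        \<open>fastforce simp: rule_subst_def split: rvar.splits\<close>)
  have premise: "(snd (rpos r ! j), u) \<in> snd (?args ! fst (rpos r ! j))
      \<longleftrightarrow> (snd (rpos r ! j), u) \<in> lam R f (ts ! fst (rpos r ! j))"
    if "r \<in> R" "rop r = g" "j < length (rpos r)" for r j u
    using args premise_source_less[OF that(1,3)] that(2) by simp
  have "(c, u) \<in> lam R f (App g ts) \<longleftrightarrow>
    (\<exists>r us. r \<in> R \<and> rop r = g \<and> length us = length (rpos r) \<and>
       (\<forall>j < length (rpos r). (snd (rpos r ! j), us ! j) \<in> snd (?args ! fst (rpos r ! j))) \<and>
       c = ract r \<and>
       u = subst id (subst (\<lambda>v. case v of PX i \<Rightarrow> Var (fst (?args ! i)) | PY j \<Rightarrow> Var (us ! j)) (rtgt r)))"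
    unfolding lam.simps rho_def using no_negative_premises by auto force
  also have "\<dots> \<longleftrightarrow> ?rhs"
    by (intro ex_cong1 conj_cong refl) (simp_all add: target premise)
  finally show ?thesis .
qed

lemma premise_source_in_set:
  "r \<in> R \<Longrightarrow> rop r = g \<Longrightarrow> length ts = ar g \<Longrightarrow> j < length (rpos r) \<Longrightarrow> ts ! fst (rpos r ! j) \<in> set ts"
  using premise_source_less by auto

lemma lam_mono:
  assumes "\<And>x. f x \<subseteq> f' x"
  shows "wf_term ar t \<Longrightarrow> lam R f t \<subseteq> lam R f' t"
proof (induction t)
  case (Var x)
  then show ?case using assms by auto
next
  case (App g ts)
  then have len: "length ts = ar g" by simp
  have IH: "lam R f (ts ! fst (rpos r ! j)) \<subseteq> lam R f' (ts ! fst (rpos r ! j))"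
    if "r \<in> R" "rop r = g" "j < length (rpos r)" for r j
    using App premise_source_in_set[OF that(1,2) len that(3)] by simp
  show ?case
  proof clarify
    fix c u assume "(c, u) \<in> lam R f (App g ts)"
    then show "(c, u) \<in> lam R f' (App g ts)" unfolding lam_App_iff[OF len] using IH by blast
  qed
qed

lemma lam_continuous:
  assumes chain: "\<And>i x. fs i x \<subseteq> fs (Suc i) x"
  shows "wf_term ar t \<Longrightarrow> lam R (\<lambda>x. \<Union>i. fs i x) t = (\<Union>i. lam R (fs i) t)"
proof (induction t)
  case (Var x)
  then show ?case by auto
next
  case (App g ts)
  then have len: "length ts = ar g" by simp
  have lam_chain: "lam R (fs i) s \<subseteq> lam R (fs k) s" if "i \<le> k" "wf_term ar s" for i k s
  proof (rule lam_mono[OF _ that(2)])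
    show "fs i x \<subseteq> fs k x" for x using lift_Suc_mono_le[of "\<lambda>i. fs i x", OF chain that(1)] .
  qed
  have "lam R (\<lambda>x. \<Union>i. fs i x) (App g ts) \<subseteq> (\<Union>i. lam R (fs i) (App g ts))"
  proof clarify
    fix c u assume "(c, u) \<in> lam R (\<lambda>x. \<Union>i. fs i x) (App g ts)"
    then obtain r us where r: "r \<in> R" "rop r = g" "length us = length (rpos r)"
      "c = ract r" "u = subst (rule_subst ts us) (rtgt r)"
      and premise: "\<And>j. j < length (rpos r) \<Longrightarrow>
        (snd (rpos r ! j), us ! j) \<in> lam R (\<lambda>x. \<Union>i. fs i x) (ts ! fst (rpos r ! j))"
      unfolding lam_App_iff[OF len] by blast
    have "\<forall>j \<in> {..<length (rpos r)}.
      eventually (\<lambda>i. (snd (rpos r ! j), us ! j) \<in> lam R (fs i) (ts ! fst (rpos r ! j))) sequentially"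
    proof
      fix j assume "j \<in> {..<length (rpos r)}"
      then have j: "j < length (rpos r)" by simp
      have arg: "ts ! fst (rpos r ! j) \<in> set ts" using premise_source_in_set[OF r(1,2) len j] .
      then have wf_arg: "wf_term ar (ts ! fst (rpos r ! j))" using App.prems by simp
      obtain i where i: "(snd (rpos r ! j), us ! j) \<in> lam R (fs i) (ts ! fst (rpos r ! j))"
        using premise[OF j] App.IH[OF arg wf_arg] by blast
      show "eventually (\<lambda>i. (snd (rpos r ! j), us ! j) \<in> lam R (fs i) (ts ! fst (rpos r ! j))) sequentially"
        using lam_chain[OF _ wf_arg] i by (intro eventually_sequentiallyI[of i]) blast
    qed
    then have "eventually (\<lambda>i. \<forall>j \<in> {..<length (rpos r)}.
      (snd (rpos r ! j), us ! j) \<in> lam R (fs i) (ts ! fst (rpos r ! j))) sequentially"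
      by (rule eventually_ball_finite[OF finite_lessThan])
    then obtain i where "\<forall>j \<in> {..<length (rpos r)}. (snd (rpos r ! j), us ! j) \<in> lam R (fs i) (ts ! fst (rpos r ! j))"
      unfolding eventually_sequentially by blast
    then have "(c, u) \<in> lam R (fs i) (App g ts)"
      unfolding lam_App_iff[OF len] using r by (intro exI[of _ r] exI[of _ us]) simp
    then show "(c, u) \<in> (\<Union>i. lam R (fs i) (App g ts))" by blast
  qed
  moreover have "(\<Union>i. lam R (fs i) (App g ts)) \<subseteq> lam R (\<lambda>x. \<Union>i. fs i x) (App g ts)"
  proof (rule UN_least)
    show "lam R (fs i) (App g ts) \<subseteq> lam R (\<lambda>x. \<Union>i. fs i x) (App g ts)" for i
      by (rule lam_mono[OF _ App.prems]) blast
  qed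
  ultimately show ?case by blast
qed

lemma tau_step_App_patience:
  assumes "has_patience ar R g i" and len: "length ts = ar g" and "i < ar g"
    and "tau_step (lam R f) (ts ! i) u"
  shows "tau_step (lam R f) (App g ts) (App g (ts[i := u]))"
proof -
  obtain r where r: "r \<in> R" "patience_rule ar g i r"
    using assms(1) unfolding has_patience_def by blast
  then have "rop r = g" "rpos r = [(i, Tau)]" "ract r = Tau"
    unfolding patience_rule_def by auto
  moreover have "subst (rule_subst ts [u]) (rtgt r) = App g (ts[i := u])"
    using patience_target[OF r(2) len assms(3)] .
  ultimately show ?thesis
    unfolding tau_step_def lam_App_iff[OF len] using r(1) assms(4)
    by (intro exI[of _ r] exI[of _ "[u]"]) (simp add: tau_step_def)
qed

lemma tau_steps_App_patience:
  assumes "has_patience ar R g i" and len: "length ts = ar g" and "i < ar g"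
    and "tau_steps (lam R f) (ts ! i) u"
  shows "tau_steps (lam R f) (App g ts) (App g (ts[i := u]))"
  using assms(4)
proof (induction rule: rtranclp_induct)
  case base
  then show ?case by simp
next
  case (step v w)
  have "tau_step (lam R f) (App g (ts[i := v])) (App g ((ts[i := v])[i := w]))"
    using tau_step_App_patience[OF assms(1) _ assms(3), of "ts[i := v]" f w] len assms(3) step.hyps(2)
    by simp
  with step.IH show ?case by simp
qed

lemma tau_steps_App:
  assumes len: "length ts = ar g" "length ts' = ar g"
    and args: "\<And>k. k < ar g \<Longrightarrow> tau_steps (lam R f) (ts ! k) (ts' ! k)"
    and patience: "\<And>k. k < ar g \<Longrightarrow> ts ! k \<noteq> ts' ! k \<Longrightarrow> has_patience ar R g k"
  shows "tau_steps (lam R f) (App g ts) (App g ts')"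
proof -
  have "tau_steps (lam R f) (App g ts) (App g (take n ts' @ drop n ts))" if "n \<le> ar g" for n
    using that
  proof (induction n)
    case 0
    then show ?case by simp
  next
    case (Suc n)
    let ?mid = "take n ts' @ drop n ts"
    have mid: "length ?mid = ar g" "?mid ! n = ts ! n"
      "?mid[n := ts' ! n] = take (Suc n) ts' @ drop (Suc n) ts"
      using Suc.prems len by (simp_all add: nth_append list_eq_iff_nth_eq nth_list_update)
    have "tau_steps (lam R f) (App g ?mid) (App g (?mid[n := ts' ! n]))"
    proof (cases "ts ! n = ts' ! n")
      case True
      then have "?mid[n := ts' ! n] = ?mid" using mid(2) by (metis list_update_id)
      then show ?thesis by simp
    next
      case False
      then show ?thesis
        using tau_steps_App_patience[OF patience mid(1)] args Suc.prems mid(2) by simp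
    qed
    with Suc.IH Suc.prems show ?case using mid(3) by (simp add: rtranclp_trans)
  qed
  from this[OF order_refl] show ?thesis using len by simp
qed

lemma tau_steps_subst:
  assumes "wf_term ar t"
    and "\<And>v. v \<in> vars t \<Longrightarrow> tau_steps (lam R f) (\<sigma> v) (\<sigma>' v)"
    and "\<And>h vs k v. App h vs \<in> subterms t \<Longrightarrow> k < length vs \<Longrightarrow> v \<in> vars (vs ! k) \<Longrightarrow>
      \<sigma> v \<noteq> \<sigma>' v \<Longrightarrow> has_patience ar R h k"
  shows "tau_steps (lam R f) (subst \<sigma> t) (subst \<sigma>' t)"
  using assms
proof (induction t)
  case (Var x)
  then show ?case by simp
next
  case (App h vs)
  then have len: "length vs = ar h" by simp
  show ?case
    unfolding subst.simps
  proof (rule tau_steps_App)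
    show "length (map (subst \<sigma>) vs) = ar h" "length (map (subst \<sigma>') vs) = ar h"
      using len by simp_all
  next
    fix k assume k: "k < ar h"
    then have arg: "vs ! k \<in> set vs" using len by simp
    have "tau_steps (lam R f) (subst \<sigma> (vs ! k)) (subst \<sigma>' (vs ! k))"
    proof (rule App.IH[OF arg])
      show "wf_term ar (vs ! k)" using App.prems(1) arg by simp
      show "tau_steps (lam R f) (\<sigma> v) (\<sigma>' v)" if "v \<in> vars (vs ! k)" for v
        using App.prems(2) arg that by auto
      show "has_patience ar R h' k'"
        if "App h' vs' \<in> subterms (vs ! k)" "k' < length vs'" "v \<in> vars (vs' ! k')" "\<sigma> v \<noteq> \<sigma>' v"
        for h' vs' k' v
        using App.prems(3)[OF _ that(2-4)] that(1) arg by auto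
    qed
    then show "tau_steps (lam R f) (map (subst \<sigma>) vs ! k) (map (subst \<sigma>') vs ! k)"
      using k len by simp
  next
    fix k assume k: "k < ar h" and "map (subst \<sigma>) vs ! k \<noteq> map (subst \<sigma>') vs ! k"
    then have "subst \<sigma> (vs ! k) \<noteq> subst \<sigma>' (vs ! k)" using len by simp
    then obtain v where "v \<in> vars (vs ! k)" "\<sigma> v \<noteq> \<sigma>' v" using subst_cong by metis
    then show "has_patience ar R h k"
      using App.prems(3)[OF self_in_subterms] k len by simp
  qed
qed

end

section \<open>Simply WB cool GSOS laws\<close>

locale simply_wb_cool_gsos = positive_gsos +
  assumes tau_premise_patience: "r \<in> R \<Longrightarrow> (i, Tau) \<in> set (rpos r) \<Longrightarrow> \<exists>i'. patience_rule ar (rop r) i' r"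
    and active_patience: "r \<in> R \<Longrightarrow> (i, c) \<in> set (rpos r) \<Longrightarrow> has_patience ar R (rop r) i"
    and receiving_patience: "receiving_arg R g i \<Longrightarrow> has_patience ar R g i"
    and straight: "r \<in> R \<Longrightarrow> distinct (map fst (rpos r))"
    and smooth: "r \<in> R \<Longrightarrow> (i, c) \<in> set (rpos r) \<Longrightarrow> PX i \<notin> vars (rtgt r)"
begin

lemma weak_step_patience_rule:
  assumes r: "r \<in> R" "patience_rule ar g i r" and len: "length ts = ar g"
    and lus: "length us = length (rpos r)"
    and premise: "weak_step (lam R f) Tau (ts ! i) (us ! 0)"
  shows "weak_step (lam R f) (ract r) (App g ts) (subst (rule_subst ts us) (rtgt r))"
proof -
  have rule: "rop r = g" "rpos r = [(i, Tau)]" "ract r = Tau"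
    using r(2) unfolding patience_rule_def by auto
  then have i: "i < ar g" using premise_source_less[OF r(1), of 0] by simp
  have us: "us = [us ! 0]" using lus rule(2) by (cases us) auto
  have "has_patience ar R g i" using r unfolding has_patience_def by blast
  then have "tau_steps (lam R f) (App g ts) (App g (ts[i := us ! 0]))"
    using tau_steps_App_patience len i premise by (simp add: weak_step_Tau_iff)
  then show ?thesis
    using patience_target[OF r(2) len i, of "us ! 0"] us rule(3) by (simp add: weak_step_Tau_iff)
qed

lemma tau_steps_target:
  assumes r: "r \<in> R" and steps: "\<And>j. j < length (rpos r) \<Longrightarrow> tau_steps (lam R f) (bs ! j) (us ! j)"
  shows "tau_steps (lam R f) (subst (rule_subst ts bs) (rtgt r)) (subst (rule_subst ts us) (rtgt r))"
proof (rule tau_steps_subst[OF wf_term_target[OF r]])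
  fix v assume v: "v \<in> vars (rtgt r)"
  show "tau_steps (lam R f) (rule_subst ts bs v) (rule_subst ts us v)"
  proof (cases v)
    case (PY j)
    then show ?thesis using target_vars_bounded[OF r v] steps by (simp add: rule_subst_def)
  qed (simp add: rule_subst_def)
next
  fix h vs k v
  assume sub: "App h vs \<in> subterms (rtgt r)" "k < length vs" "v \<in> vars (vs ! k)"
    and "rule_subst ts bs v \<noteq> rule_subst ts us v"
  then obtain j where v: "v = PY j" by (cases v) (simp_all add: rule_subst_def)
  have "vars (vs ! k) \<subseteq> vars (rtgt r)" using vars_subterm[OF sub(1)] nth_mem[OF sub(2)] by auto
  then have "j < length (rpos r)" using target_vars_bounded[OF r, of v] sub(3) v by auto
  then have "receiving_arg R h k" unfolding receiving_arg_def using r sub v by blast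
  then show "has_patience ar R h k" by (rule receiving_patience)
qed

lemma premise_index_unique:
  assumes "r \<in> R" "j < length (rpos r)" "j' < length (rpos r)" "fst (rpos r ! j) = fst (rpos r ! j')"
  shows "j = j'"
  using straight[OF assms(1)] assms(2-4) by (simp add: nth_eq_iff_index_eq[symmetric])

lemma ex_advanced_argument:
  assumes r: "r \<in> R"
    and premise: "\<And>j. j < length (rpos r) \<Longrightarrow>
      weak_step (lam R f) (snd (rpos r ! j)) (ts ! fst (rpos r ! j)) (us ! j)"
    and visible: "\<And>j. j < length (rpos r) \<Longrightarrow> snd (rpos r ! j) \<noteq> Tau"
  shows "\<exists>a. tau_steps (lam R f) (ts ! k) a \<and> (k \<notin> fst ` set (rpos r) \<longrightarrow> a = ts ! k) \<and>
    (\<forall>j < length (rpos r). fst (rpos r ! j) = k \<longrightarrow>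
      (\<exists>b. (snd (rpos r ! j), b) \<in> lam R f a \<and> tau_steps (lam R f) b (us ! j)))"
proof (cases "k \<in> fst ` set (rpos r)")
  case True
  then obtain j where j: "j < length (rpos r)" "fst (rpos r ! j) = k" by (metis imageE in_set_conv_nth)
  then obtain a b where "tau_steps (lam R f) (ts ! k) a" "(snd (rpos r ! j), b) \<in> lam R f a" "tau_steps (lam R f) b (us ! j)"
    using premise[OF j(1)] visible[OF j(1)] unfolding weak_step_def by blast
  moreover have "j' = j" if "j' < length (rpos r)" "fst (rpos r ! j') = k" for j'
    using premise_index_unique[OF r that(1) j(1)] that(2) j(2) by simp
  ultimately show ?thesis using True by blast
next
  case False
  then have "fst (rpos r ! j) \<noteq> k" if "j < length (rpos r)" for j using that nth_mem by fastforce
  then show ?thesis by blast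
qed

lemma visible_premises_split:
  assumes r: "r \<in> R" "rop r = g" and len: "length ts = ar g"
    and premise: "\<And>j. j < length (rpos r) \<Longrightarrow>
      weak_step (lam R f) (snd (rpos r ! j)) (ts ! fst (rpos r ! j)) (us ! j)"
    and visible: "\<And>j. j < length (rpos r) \<Longrightarrow> snd (rpos r ! j) \<noteq> Tau"
  obtains ts' bs where "length ts' = ar g" "length bs = length (rpos r)"
    and "tau_steps (lam R f) (App g ts) (App g ts')"
    and "\<And>k. k \<notin> fst ` set (rpos r) \<Longrightarrow> k < ar g \<Longrightarrow> ts' ! k = ts ! k"
    and "\<And>j. j < length (rpos r) \<Longrightarrow> (snd (rpos r ! j), bs ! j) \<in> lam R f (ts' ! fst (rpos r ! j))"
    and "\<And>j. j < length (rpos r) \<Longrightarrow> tau_steps (lam R f) (bs ! j) (us ! j)"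
proof -
  let ?\<alpha> = "lam R f" and ?n = "length (rpos r)"
  obtain A where A: "\<And>k. tau_steps ?\<alpha> (ts ! k) (A k)"
    "\<And>k. k \<notin> fst ` set (rpos r) \<Longrightarrow> A k = ts ! k"
    "\<And>j. j < ?n \<Longrightarrow> \<exists>b. (snd (rpos r ! j), b) \<in> ?\<alpha> (A (fst (rpos r ! j))) \<and> tau_steps ?\<alpha> b (us ! j)"
    using ex_advanced_argument[OF r(1) premise visible] by metis
  obtain B where B: "\<And>j. j < ?n \<Longrightarrow> (snd (rpos r ! j), B j) \<in> ?\<alpha> (A (fst (rpos r ! j))) \<and> tau_steps ?\<alpha> (B j) (us ! j)"
    using A(3) by metis
  define ts' where "ts' = map A [0..<ar g]"
  have ts': "ts' ! fst (rpos r ! j) = A (fst (rpos r ! j))" if "j < ?n" for j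
    using premise_source_less[OF r(1) that] r(2) unfolding ts'_def by simp
  show ?thesis
  proof (rule that[of ts' "map B [0..<?n]"])
    show "tau_steps ?\<alpha> (App g ts) (App g ts')"
    proof (rule tau_steps_App[OF len])
      show "length ts' = ar g" unfolding ts'_def by simp
      show "tau_steps ?\<alpha> (ts ! k) (ts' ! k)" if "k < ar g" for k
        using A(1) that unfolding ts'_def by simp
      show "has_patience ar R g k" if "k < ar g" "ts ! k \<noteq> ts' ! k" for k
      proof -
        from that have "k \<in> fst ` set (rpos r)" using A(2) unfolding ts'_def by fastforce
        then obtain c where "(k, c) \<in> set (rpos r)" by force
        then show ?thesis using active_patience r by blast
      qed
    qed
  qed (use A B ts' in \<open>simp_all add: ts'_def\<close>)
qed

lemma weak_step_visible_rule:
  assumes r: "r \<in> R" "rop r = g" and len: "length ts = ar g"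
    and premise: "\<And>j. j < length (rpos r) \<Longrightarrow>
      weak_step (lam R f) (snd (rpos r ! j)) (ts ! fst (rpos r ! j)) (us ! j)"
    and visible: "\<And>j. j < length (rpos r) \<Longrightarrow> snd (rpos r ! j) \<noteq> Tau"
  shows "weak_step (lam R f) (ract r) (App g ts) (subst (rule_subst ts us) (rtgt r))"
proof -
  obtain ts' bs where len': "length ts' = ar g" and lbs: "length bs = length (rpos r)"
    and before: "tau_steps (lam R f) (App g ts) (App g ts')"
    and unchanged: "\<And>k. k \<notin> fst ` set (rpos r) \<Longrightarrow> k < ar g \<Longrightarrow> ts' ! k = ts ! k"
    and fire: "\<And>j. j < length (rpos r) \<Longrightarrow> (snd (rpos r ! j), bs ! j) \<in> lam R f (ts' ! fst (rpos r ! j))"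
    and after: "\<And>j. j < length (rpos r) \<Longrightarrow> tau_steps (lam R f) (bs ! j) (us ! j)"
    using visible_premises_split[OF r len premise visible] by metis
  have "(ract r, subst (rule_subst ts' bs) (rtgt r)) \<in> lam R f (App g ts')"
    unfolding lam_App_iff[OF len'] using r lbs fire by blast
  moreover have "subst (rule_subst ts' bs) (rtgt r) = subst (rule_subst ts bs) (rtgt r)"
  proof (rule subst_cong)
    fix v assume v: "v \<in> vars (rtgt r)"
    show "rule_subst ts' bs v = rule_subst ts bs v"
    proof (cases v)
      case (PX k)
      then have "k \<notin> fst ` set (rpos r)" using smooth[OF r(1)] v by force
      then show ?thesis using unchanged target_vars_bounded[OF r(1) v] PX r(2)
        by (simp add: rule_subst_def)
    qed (simp add: rule_subst_def)
  qed
  ultimately show ?thesis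
    using weak_stepI[OF before _ tau_steps_target[OF r(1) after]] by simp
qed

lemma weak_step_rule:
  assumes r: "r \<in> R" "rop r = g" and len: "length ts = ar g" and lus: "length us = length (rpos r)"
    and premise: "\<And>j. j < length (rpos r) \<Longrightarrow>
      weak_step (lam R f) (snd (rpos r ! j)) (ts ! fst (rpos r ! j)) (us ! j)"
  shows "weak_step (lam R f) (ract r) (App g ts) (subst (rule_subst ts us) (rtgt r))"
proof (cases "\<exists>j < length (rpos r). snd (rpos r ! j) = Tau")
  case True
  then obtain j where "j < length (rpos r)" "snd (rpos r ! j) = Tau" by blast
  then have "(fst (rpos r ! j), Tau) \<in> set (rpos r)" by (metis nth_mem prod.collapse)
  then obtain i where patience: "patience_rule ar g i r" using tau_premise_patience r by blast
  then have "rpos r = [(i, Tau)]" unfolding patience_rule_def by blast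
  then have "weak_step (lam R f) Tau (ts ! i) (us ! 0)" using premise[of 0] by simp
  then show ?thesis using weak_step_patience_rule[OF r(1) patience len lus] by blast
next
  case False
  then show ?thesis using weak_step_visible_rule[OF r len premise] by blast
qed

lemma lam_weak_step:
  assumes "\<And>x c y. (c, y) \<in> f' x \<Longrightarrow> weak_step f c x y"
  shows "wf_term ar t \<Longrightarrow> (c, u) \<in> lam R f' t \<Longrightarrow> weak_step (lam R f) c t u"
proof (induction t arbitrary: c u)
  case (Var x)
  then obtain y where "u = Var y" "(c, y) \<in> f' x" by auto
  then show ?case using weak_step_lam_Var[OF assms] by simp
next
  case (App g ts)
  then have len: "length ts = ar g" by simp
  obtain r us where r: "r \<in> R" "rop r = g" "length us = length (rpos r)"
    "c = ract r" "u = subst (rule_subst ts us) (rtgt r)"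
    and premise: "\<And>j. j < length (rpos r) \<Longrightarrow> (snd (rpos r ! j), us ! j) \<in> lam R f' (ts ! fst (rpos r ! j))"
    using App.prems(2) unfolding lam_App_iff[OF len] by blast
  have "weak_step (lam R f) (snd (rpos r ! j)) (ts ! fst (rpos r ! j)) (us ! j)"
    if "j < length (rpos r)" for j
  proof -
    have "ts ! fst (rpos r ! j) \<in> set ts" using premise_source_in_set[OF r(1,2) len that] .
    then show ?thesis using App.IH App.prems(1) premise[OF that] by simp
  qed
  then show ?case using weak_step_rule[OF r(1,2) len r(3)] r(4,5) by simp
qed

lemma lam_subset_rtc:
  assumes "\<And>x. f' x \<subseteq> rtc f x" and "wf_term ar t"
  shows "lam R f' t \<subseteq> rtc (lam R f) t"
  using lam_weak_step[OF _ assms(2)] assms(1) by (auto simp: mem_rtc_iff subset_iff)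

end

lemma simply_wb_cool_gsosI:
  assumes "gsos_language ar R" and cool: "simply_wb_cool ar R"
  shows "simply_wb_cool_gsos ar R"
proof unfold_locales
  have neg: "rneg r = []" if "r \<in> R" for r
    using cool that unfolding simply_wb_cool_def positive_def by blast
  have tau_rules: "\<forall>r\<in>R. (\<exists>(i, c)\<in>set (rpos r @ rneg r). c = Tau) \<longrightarrow>
      patience_rule ar (rop r) (fst (hd (rpos r))) r"
    using cool unfolding simply_wb_cool_def by blast
  have active: "active_arg R g i \<Longrightarrow> has_patience ar R g i" for g i
    using cool unfolding simply_wb_cool_def by blast
  have "straight_op R g" "smooth_op R g" for g
    using cool unfolding simply_wb_cool_def by blast+
  then have straight: "distinct (map fst (rpos r))"
    and smooth: "\<forall>i\<in>set (map fst (rpos r)). PX i \<notin> vars (rtgt r)" if "r \<in> R" for r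
    using that neg[OF that] unfolding straight_op_def smooth_op_def premise_lhs_def by simp_all
  show "r \<in> R \<Longrightarrow> wf_rule ar r" for r using assms(1) unfolding gsos_language_def by blast
  show "r \<in> R \<Longrightarrow> rneg r = []" for r by (rule neg)
  show "\<exists>i'. patience_rule ar (rop r) i' r" if "r \<in> R" "(i, Tau) \<in> set (rpos r)" for r i
  proof -
    have "\<exists>(i, c)\<in>set (rpos r @ rneg r). c = Tau" using that(2) by auto
    then show ?thesis using tau_rules that(1) by blast
  qed
  show "has_patience ar R (rop r) i" if "r \<in> R" "(i, c) \<in> set (rpos r)" for r i c
  proof (rule active)
    have "i \<in> fst ` set (rpos r)" using rev_image_eqI[OF that(2), of i fst] by simp
    then have "i \<in> set (premise_lhs r)" unfolding premise_lhs_def by simp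
    then show "active_arg R (rop r) i" unfolding active_arg_def using that(1) by blast
  qed
  show "receiving_arg R g i \<Longrightarrow> has_patience ar R g i" for g i
    using cool unfolding simply_wb_cool_def by blast
  show "distinct (map fst (rpos r))" if "r \<in> R" for r using straight[OF that] .
  show "PX i \<notin> vars (rtgt r)" if "r \<in> R" "(i, c) \<in> set (rpos r)" for r i c
  proof -
    have "i \<in> set (map fst (rpos r))" using rev_image_eqI[OF that(2), of i fst] by simp
    then show ?thesis using smooth[OF that(1)] by blast
  qed
qed

theorem mainTheorem2:
  fixes ar :: "'o \<Rightarrow> nat" and R :: "('o, 'd) rule set"
  assumes "gsos_language ar R" and "simply_wb_cool ar R"
  shows
    \<comment> \<open>continuity\<close>
    "(\<forall>fs :: nat \<Rightarrow> 'x \<Rightarrow> ('d lab \<times> 'x) set.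
        (\<forall>i. kmap (fs i)) \<and> (\<forall>i x. fs i x \<subseteq> fs (Suc i) x) \<longrightarrow>
        (\<forall>t. wf_term ar t \<longrightarrow> lam R (\<lambda>x. \<Union>i. fs i x) t = (\<Union>i. lam R (fs i) t)))
   \<and> \<comment> \<open>unitality\<close>
     (\<forall>f :: 'x \<Rightarrow> ('d lab \<times> 'x) set. kmap f \<longrightarrow>
        (\<forall>t. wf_term ar t \<longrightarrow> lam R (\<lambda>x. eta x \<union> f x) t \<subseteq> rtc (lam R f) t))
   \<and> \<comment> \<open>observability\<close>
     (\<forall>f :: 'x \<Rightarrow> ('d lab \<times> 'x) set. kmap f \<longrightarrow>
        (\<forall>t. wf_term ar t \<longrightarrow> lam R (kcomp f f) t \<subseteq> rtc (lam R f) t))"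
proof -
  interpret simply_wb_cool_gsos ar R by (rule simply_wb_cool_gsosI[OF assms])
  show ?thesis
  proof (intro conjI allI impI)
    show "lam R (\<lambda>x. \<Union>i. fs i x) t = (\<Union>i. lam R (fs i) t)"
      if "(\<forall>i. kmap (fs i)) \<and> (\<forall>i x. fs i x \<subseteq> fs (Suc i) x)" "wf_term ar t"
      for fs :: "nat \<Rightarrow> 'x \<Rightarrow> ('d lab \<times> 'x) set" and t
      using lam_continuous that by blast
    show "lam R (\<lambda>x. eta x \<union> f x) t \<subseteq> rtc (lam R f) t" if "wf_term ar t"
      for f :: "'x \<Rightarrow> ('d lab \<times> 'x) set" and t
      using lam_subset_rtc[OF eta_union_subset_rtc that] .
    show "lam R (kcomp f f) t \<subseteq> rtc (lam R f) t" if "wf_term ar t"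
      for f :: "'x \<Rightarrow> ('d lab \<times> 'x) set" and t
      using lam_subset_rtc[OF kcomp_self_subset_rtc that] .
  qed
qed

end
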